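(* Let $I=(G,E^\ell,E^f,s,t,c,d)$ be an instance of the Bilevel Shortest Path problem in the weak path completion variant, where $G$ is directed or undirected. Then there exists a pair $(X,Y)$ with $X\subseteq E^\ell$ and $Y\subseteq E^f$ such that $X$ is an optimal choice for the leader's problem, $Y$ is an optimal choice for the follower's problem given $X$, and $X\cup Y$ is an $s$-$t$-path, i.e. $X\cup Y\in\mathcal P_{st}$.
   Context: An instance is $I=(G,E^\ell,E^f,s,t,c,d)$: $G=(V,E)$ a simple directed or undirected graph, $E=E^\ell\cup E^f$ a partition (leader's and follower's edges), $s,t\in V$, $c,d:E\to\mathbb{R}_{\ge0}$; $f(Z)=\sum_{e\in Z}f(e)$. Paths are simple and identified with edge sets; $\mathcal P_{st}$, the set of $s$-$t$-paths, is assumed nonempty. Weak variant: $\mathrm{OPT}_{\mathrm{weak}}(I)=\min c(X\cup Y)$ over $X\subseteq E^\ell$ and $Y\in\arg\min\{d(Y'):Y'\subseteq E^f,\ \exists P\subseteq X\cup Y' \text{ with } P\in\mathcal P_{st}\}$; leader choices making the follower's problem infeasible are infeasible; optimistic setting: among follower-optimal responses the follower picks one minimizing $c(Y)$. An optimal choice for the leader is a feasible $X$ attaining $\mathrm{OPT}_{\mathrm{weak}}(I)$. *)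

theory Defs
  imports Complex_Main
begin

text \<open>A graph G = (V, E) with abstract edges; ends e = (u,v) gives the endpoints of e
  (tail and head if the graph is directed; an unordered pair if undirected).\<close>

definition edge_joins :: "bool \<Rightarrow> ('e \<Rightarrow> 'v \<times> 'v) \<Rightarrow> 'e \<Rightarrow> 'v \<Rightarrow> 'v \<Rightarrow> bool" where
  "edge_joins directed ends e u v \<longleftrightarrow>
     ends e = (u, v) \<or> (\<not> directed \<and> ends e = (v, u))"

definition simple_graph :: "bool \<Rightarrow> 'v set \<Rightarrow> 'e set \<Rightarrow> ('e \<Rightarrow> 'v \<times> 'v) \<Rightarrow> bool" where
  "simple_graph directed V E ends \<longleftrightarrow>
     finite V \<and> finite E \<and>
     (\<forall>e\<in>E. fst (ends e) \<in> V \<and> snd (ends e) \<in> V \<and> fst (ends e) \<noteq> snd (ends e)) \<and>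
     (\<forall>e\<in>E. \<forall>e'\<in>E. e \<noteq> e' \<longrightarrow>
        \<not> edge_joins directed ends e' (fst (ends e)) (snd (ends e)))"

definition is_st_path ::
  "bool \<Rightarrow> 'e set \<Rightarrow> ('e \<Rightarrow> 'v \<times> 'v) \<Rightarrow> 'v \<Rightarrow> 'v \<Rightarrow> 'e set \<Rightarrow> bool" where
  "is_st_path directed E ends s t P \<longleftrightarrow>
     (\<exists>vs es. length vs = Suc (length es) \<and> hd vs = s \<and> last vs = t \<and> distinct vs \<and>
        set es \<subseteq> E \<and>
        (\<forall>i < length es. edge_joins directed ends (es ! i) (vs ! i) (vs ! Suc i)) \<and>
        P = set es)"

definition bsp_instance ::
  "bool \<Rightarrow> 'v set \<Rightarrow> 'e set \<Rightarrow> ('e \<Rightarrow> 'v \<times> 'v) \<Rightarrow> 'e set \<Rightarrow> 'e set \<Rightarrow> 'v \<Rightarrow> 'v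
    \<Rightarrow> ('e \<Rightarrow> real) \<Rightarrow> ('e \<Rightarrow> real) \<Rightarrow> bool" where
  "bsp_instance directed V E ends El Ef s t c d \<longleftrightarrow>
     simple_graph directed V E ends \<and>
     El \<union> Ef = E \<and> El \<inter> Ef = {} \<and> s \<in> V \<and> t \<in> V \<and>
     (\<forall>e\<in>E. c e \<ge> 0 \<and> d e \<ge> 0) \<and>
     (\<exists>P. is_st_path directed E ends s t P)"

definition weak_follower_feasible ::
  "bool \<Rightarrow> 'e set \<Rightarrow> ('e \<Rightarrow> 'v \<times> 'v) \<Rightarrow> 'e set \<Rightarrow> 'v \<Rightarrow> 'v \<Rightarrow> 'e set \<Rightarrow> 'e set \<Rightarrow> bool" where
  "weak_follower_feasible directed E ends Ef s t X Y \<longleftrightarrow>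
     Y \<subseteq> Ef \<and> (\<exists>P. P \<subseteq> X \<union> Y \<and> is_st_path directed E ends s t P)"

definition weak_follower_argmin ::
  "bool \<Rightarrow> 'e set \<Rightarrow> ('e \<Rightarrow> 'v \<times> 'v) \<Rightarrow> 'e set \<Rightarrow> 'v \<Rightarrow> 'v \<Rightarrow> ('e \<Rightarrow> real)
    \<Rightarrow> 'e set \<Rightarrow> 'e set \<Rightarrow> bool" where
  "weak_follower_argmin directed E ends Ef s t d X Y \<longleftrightarrow>
     weak_follower_feasible directed E ends Ef s t X Y \<and>
     (\<forall>Y'. weak_follower_feasible directed E ends Ef s t X Y' \<longrightarrow> sum d Y \<le> sum d Y')"

text \<open>Optimistic setting: an optimal follower choice given X is an element of the argmin
  set minimising c(Y) among all elements of the argmin set.\<close>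
definition weak_follower_optimal ::
  "bool \<Rightarrow> 'e set \<Rightarrow> ('e \<Rightarrow> 'v \<times> 'v) \<Rightarrow> 'e set \<Rightarrow> 'v \<Rightarrow> 'v \<Rightarrow> ('e \<Rightarrow> real) \<Rightarrow> ('e \<Rightarrow> real)
    \<Rightarrow> 'e set \<Rightarrow> 'e set \<Rightarrow> bool" where
  "weak_follower_optimal directed E ends Ef s t c d X Y \<longleftrightarrow>
     weak_follower_argmin directed E ends Ef s t d X Y \<and>
     (\<forall>Y'. weak_follower_argmin directed E ends Ef s t d X Y' \<longrightarrow> sum c Y \<le> sum c Y')"

text \<open>X is an optimal leader choice: X \<subseteq> E^l is feasible and attains
  OPT_weak(I) = min c(X' \<union> Y') over X' \<subseteq> E^l and Y' in the follower's argmin given X'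
  (the follower's response to X chosen optimistically).\<close>
definition weak_leader_optimal ::
  "bool \<Rightarrow> 'e set \<Rightarrow> ('e \<Rightarrow> 'v \<times> 'v) \<Rightarrow> 'e set \<Rightarrow> 'e set \<Rightarrow> 'v \<Rightarrow> 'v
    \<Rightarrow> ('e \<Rightarrow> real) \<Rightarrow> ('e \<Rightarrow> real) \<Rightarrow> 'e set \<Rightarrow> bool" where
  "weak_leader_optimal directed E ends El Ef s t c d X \<longleftrightarrow>
     X \<subseteq> El \<and>
     (\<exists>Y. weak_follower_argmin directed E ends Ef s t d X Y \<and>
        (\<forall>X' Y'. X' \<subseteq> El \<longrightarrow> weak_follower_argmin directed E ends Ef s t d X' Y' \<longrightarrow>
            sum c (X \<union> Y) \<le> sum c (X' \<union> Y')))"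

end

theory Submission
  imports Defs
begin

text \<open>By finiteness there is an optimal pair (X0, Y0) of leader choice and follower response,
  and X0 \<union> Y0 contains an s-t-path P. Splitting P into its leader part X = P \<inter> El and follower
  part Y = P \<inter> Ef gives again an optimal pair: with fewer leader edges the follower has fewer
  feasible responses, so Y \<subseteq> Y0 stays d-minimal because d \<ge> 0, and c(P) \<le> c(X0 \<union> Y0) because
  c \<ge> 0. Since leader and follower edges are disjoint, minimality of c(X \<union> Y) among all
  pairs also makes Y the optimistic follower choice for X.\<close>

lemma is_st_path_subset: "is_st_path directed E ends s t P \<Longrightarrow> P \<subseteq> E"
  unfolding is_st_path_def by auto

lemma weak_follower_feasible_mono:
  assumes "X \<subseteq> X'" "weak_follower_feasible directed E ends Ef s t X Y"
  shows "weak_follower_feasible directed E ends Ef s t X' Y"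
  using assms unfolding weak_follower_feasible_def by blast

lemma weak_follower_argmin_subset:
  assumes argmin: "weak_follower_argmin directed E ends Ef s t d X\<^sub>0 Y\<^sub>0"
    and "X \<subseteq> X\<^sub>0" "Y \<subseteq> Y\<^sub>0" and feasible: "weak_follower_feasible directed E ends Ef s t X Y"
    and "finite Y\<^sub>0" "\<And>e. e \<in> Y\<^sub>0 \<Longrightarrow> d e \<ge> 0"
  shows "weak_follower_argmin directed E ends Ef s t d X Y"
  unfolding weak_follower_argmin_def
proof (intro conjI allI impI feasible)
  fix Y' assume "weak_follower_feasible directed E ends Ef s t X Y'"
  then have "weak_follower_feasible directed E ends Ef s t X\<^sub>0 Y'"
    by (rule weak_follower_feasible_mono[OF \<open>X \<subseteq> X\<^sub>0\<close>])
  then have "sum d Y\<^sub>0 \<le> sum d Y'"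
    using argmin unfolding weak_follower_argmin_def by blast
  moreover have "sum d Y \<le> sum d Y\<^sub>0"
    using assms(3,5,6) by (intro sum_mono2) auto
  ultimately show "sum d Y \<le> sum d Y'" by linarith
qed

locale weak_bsp =
  fixes directed :: bool and V :: "'v set" and E El Ef :: "'e set"
    and ends :: "'e \<Rightarrow> 'v \<times> 'v" and s t :: 'v and c d :: "'e \<Rightarrow> real"
  assumes is_instance: "bsp_instance directed V E ends El Ef s t c d"
begin

abbreviation feasible :: "'e set \<Rightarrow> 'e set \<Rightarrow> bool" where
  "feasible \<equiv> weak_follower_feasible directed E ends Ef s t"

abbreviation argmin :: "'e set \<Rightarrow> 'e set \<Rightarrow> bool" where
  "argmin \<equiv> weak_follower_argmin directed E ends Ef s t d"

definition optimal_pair :: "'e set \<Rightarrow> 'e set \<Rightarrow> bool" where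
  "optimal_pair X Y \<longleftrightarrow> X \<subseteq> El \<and> argmin X Y \<and>
     (\<forall>X' Y'. X' \<subseteq> El \<longrightarrow> argmin X' Y' \<longrightarrow> sum c (X \<union> Y) \<le> sum c (X' \<union> Y'))"

lemma edges_partition: "El \<union> Ef = E" "El \<inter> Ef = {}"
  and finite_leader_edges: "finite El"
  and finite_follower_edges: "finite Ef"
  and costs_nonneg: "\<And>e. e \<in> E \<Longrightarrow> c e \<ge> 0" "\<And>e. e \<in> E \<Longrightarrow> d e \<ge> 0"
  using is_instance unfolding bsp_instance_def simple_graph_def by auto

lemma st_path_exists: "\<exists>P. is_st_path directed E ends s t P"
  using is_instance unfolding bsp_instance_def by blast

lemma feasible_subset: "feasible X Y \<Longrightarrow> Y \<subseteq> Ef"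
  unfolding weak_follower_feasible_def by blast

lemma argmin_subset: "argmin X Y \<Longrightarrow> Y \<subseteq> Ef"
  unfolding weak_follower_argmin_def using feasible_subset by blast

lemma argmin_exists:
  assumes "feasible X Y"
  shows "\<exists>Y. argmin X Y"
proof -
  have "finite {Y. feasible X Y}"
    using finite_follower_edges feasible_subset by (auto intro: rev_finite_subset[of "Pow Ef"])
  moreover have "{Y. feasible X Y} \<noteq> {}" using assms by blast
  ultimately obtain Y where "is_arg_min (sum d) (\<lambda>Y. Y \<in> {Y. feasible X Y}) Y"
    using ex_is_arg_min_if_finite by blast
  then show ?thesis
    unfolding is_arg_min_linorder weak_follower_argmin_def by auto
qed

lemma optimal_pair_exists: "\<exists>X Y. optimal_pair X Y"
proof -
  define pairs where "pairs = {(X, Y). X \<subseteq> El \<and> argmin X Y}"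
  have "pairs \<subseteq> Pow El \<times> Pow Ef"
    unfolding pairs_def using argmin_subset by auto
  then have "finite pairs"
    by (rule finite_subset) (simp add: finite_leader_edges finite_follower_edges)
  obtain P where P: "is_st_path directed E ends s t P" using st_path_exists by blast
  have "feasible El Ef"
    using P is_st_path_subset[OF P] edges_partition(1) unfolding weak_follower_feasible_def by auto
  then obtain Y where "argmin El Y" using argmin_exists by blast
  then have "pairs \<noteq> {}" unfolding pairs_def by blast
  with \<open>finite pairs\<close> obtain p
    where "is_arg_min (\<lambda>(X, Y). sum c (X \<union> Y)) (\<lambda>p. p \<in> pairs) p"
    using ex_is_arg_min_if_finite by blast
  then obtain X Y where "(X, Y) \<in> pairs"
    and "\<forall>(X', Y') \<in> pairs. sum c (X \<union> Y) \<le> sum c (X' \<union> Y')"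
    unfolding is_arg_min_linorder by (cases p) auto
  then have "optimal_pair X Y"
    unfolding optimal_pair_def pairs_def by auto
  then show ?thesis by blast
qed

lemma optimal_pair_restrict_to_path:
  assumes optimal: "optimal_pair X\<^sub>0 Y\<^sub>0"
    and P: "P \<subseteq> X\<^sub>0 \<union> Y\<^sub>0" "is_st_path directed E ends s t P"
  shows "optimal_pair (P \<inter> El) (P \<inter> Ef)"
proof -
  have X\<^sub>0: "X\<^sub>0 \<subseteq> El" and argmin\<^sub>0: "argmin X\<^sub>0 Y\<^sub>0"
    using optimal unfolding optimal_pair_def by blast+
  have Y\<^sub>0: "Y\<^sub>0 \<subseteq> Ef" using argmin\<^sub>0 by (rule argmin_subset)
  have split: "(P \<inter> El) \<union> (P \<inter> Ef) = P"
    using is_st_path_subset[OF P(2)] edges_partition(1) by blast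
  have feasible: "feasible (P \<inter> El) (P \<inter> Ef)"
    using P(2) split unfolding weak_follower_feasible_def by blast
  have "P \<inter> El \<subseteq> X\<^sub>0" "P \<inter> Ef \<subseteq> Y\<^sub>0"
    using P(1) X\<^sub>0 Y\<^sub>0 edges_partition(2) by blast+
  moreover have "finite Y\<^sub>0"
    using Y\<^sub>0 finite_follower_edges by (rule finite_subset)
  ultimately have argmin: "argmin (P \<inter> El) (P \<inter> Ef)"
    using Y\<^sub>0 edges_partition(1)
    by (intro weak_follower_argmin_subset[OF argmin\<^sub>0 _ _ feasible]) (auto intro: costs_nonneg)
  have "finite (X\<^sub>0 \<union> Y\<^sub>0)"
    using X\<^sub>0 Y\<^sub>0 finite_leader_edges finite_follower_edges by (meson finite_Un finite_subset)
  moreover have "\<forall>e \<in> (X\<^sub>0 \<union> Y\<^sub>0) - P. c e \<ge> 0"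
    using X\<^sub>0 Y\<^sub>0 edges_partition(1) costs_nonneg(1) by blast
  ultimately have path_cost: "sum c P \<le> sum c (X\<^sub>0 \<union> Y\<^sub>0)"
    using P(1) by (intro sum_mono2) auto
  have "sum c ((P \<inter> El) \<union> (P \<inter> Ef)) \<le> sum c (X' \<union> Y')"
    if "X' \<subseteq> El" "argmin X' Y'" for X' Y'
  proof -
    have "sum c (X\<^sub>0 \<union> Y\<^sub>0) \<le> sum c (X' \<union> Y')"
      using optimal that unfolding optimal_pair_def by blast
    with path_cost show ?thesis unfolding split by linarith
  qed
  with argmin show ?thesis
    unfolding optimal_pair_def by blast
qed

lemma optimal_path_pair_exists:
  "\<exists>X Y. X \<subseteq> El \<and> Y \<subseteq> Ef \<and> optimal_pair X Y \<and> is_st_path directed E ends s t (X \<union> Y)"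
proof -
  obtain X\<^sub>0 Y\<^sub>0 where optimal: "optimal_pair X\<^sub>0 Y\<^sub>0" using optimal_pair_exists by blast
  then have "argmin X\<^sub>0 Y\<^sub>0" unfolding optimal_pair_def by blast
  then obtain P where P: "P \<subseteq> X\<^sub>0 \<union> Y\<^sub>0" "is_st_path directed E ends s t P"
    unfolding weak_follower_argmin_def weak_follower_feasible_def by blast
  have "(P \<inter> El) \<union> (P \<inter> Ef) = P"
    using is_st_path_subset[OF P(2)] edges_partition(1) by blast
  then show ?thesis
    using optimal_pair_restrict_to_path[OF optimal P] P(2) by (intro exI conjI) auto
qed

lemma optimal_pair_leader_optimal:
  "optimal_pair X Y \<Longrightarrow> weak_leader_optimal directed E ends El Ef s t c d X"
  unfolding optimal_pair_def weak_leader_optimal_def by blast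

lemma optimal_pair_follower_optimal:
  assumes "optimal_pair X Y"
  shows "weak_follower_optimal directed E ends Ef s t c d X Y"
  unfolding weak_follower_optimal_def
proof (intro conjI allI impI)
  have X: "X \<subseteq> El" and argmin: "argmin X Y"
    using assms unfolding optimal_pair_def by blast+
  show "argmin X Y" by (fact argmin)
  have sum_split: "sum c (X \<union> Y') = sum c X + sum c Y'" if "Y' \<subseteq> Ef" for Y'
    using X that edges_partition(2) finite_leader_edges finite_follower_edges
    by (intro sum.union_disjoint) (auto intro: finite_subset)
  fix Y' assume "argmin X Y'"
  then have "sum c (X \<union> Y) \<le> sum c (X \<union> Y')"
    using assms X unfolding optimal_pair_def by blast
  then show "sum c Y \<le> sum c Y'"
    using sum_split argmin_subset[OF argmin] argmin_subset[OF \<open>argmin X Y'\<close>] by simp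
qed

end

theorem lemma3p2:
  fixes directed :: bool and V :: "'v set" and E El Ef :: "'e set"
    and ends :: "'e \<Rightarrow> 'v \<times> 'v" and s t :: 'v and c d :: "'e \<Rightarrow> real"
  assumes "bsp_instance directed V E ends El Ef s t c d"
  shows "\<exists>X Y. X \<subseteq> El \<and> Y \<subseteq> Ef \<and>
           weak_leader_optimal directed E ends El Ef s t c d X \<and>
           weak_follower_optimal directed E ends Ef s t c d X Y \<and>
           is_st_path directed E ends s t (X \<union> Y)"
proof -
  interpret weak_bsp directed V E El Ef ends s t c d
    using assms by unfold_locales
  obtain X Y where "X \<subseteq> El" "Y \<subseteq> Ef" and optimal: "optimal_pair X Y"
    and "is_st_path directed E ends s t (X \<union> Y)"
    using optimal_path_pair_exists by blast
  then show ?thesis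
    using optimal_pair_leader_optimal[OF optimal] optimal_pair_follower_optimal[OF optimal]
    by (intro exI conjI)
qed

end
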